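(* Let $w\in\mathbb{R}^J_+\setminus\{0\}$. Then $$\mathscr{P}_1(w)=\sup_{\mu\in\mathbb{M}_1^J,\ \lambda\in\mathbb{L}^M}\Big\{\sum_{i\in\Omega}f_i(\mu_i,\lambda_i,w)-\beta(\mu,w)\ \Big|\ \mathbb{E}[\lambda]=0\Big\},$$ where for $i\in\Omega$, $\mu_i\in\mathbb{R}^J_+$, $\lambda_i\in\mathbb{R}^M$, $$f_i(\mu_i,\lambda_i,w)=\inf_{(x_i,y_i)\in\mathcal{F}_i}\Big(w^{\mathsf T}\big[\mu_i\cdot(Cx_i+Q_iy_i)\big]+p_i\lambda_i^{\mathsf T}x_i\Big).$$
   Context: Probability space: $\Omega=\{1,\dots,I\}$, $I\ge 2$, with probabilities $p_i>0$, $\sum_{i\in\Omega}p_i=1$. For an integer $J\ge1$, $\mathbb{L}^J$ denotes the set of random vectors $u:\Omega\to\mathbb{R}^J$, identified with tuples $(u_1,\dots,u_I)$, $u_i\in\mathbb{R}^J$; $\mathbb{L}^{J\times N}$ denotes random $J\times N$ matrices with realizations $Q_1,\dots,Q_I$; $\mathbb{L}^N_+$ the random vectors with nonnegative components; $\mathbb{E}[u]=\sum_{i}p_iu_i$. $u\le v$ means $u_i^j\le v_i^j$ for all $i,j$. A multivariate convex risk measure is a map $R:\mathbb{L}^J\to 2^{\mathbb{R}^J}$ such that: (A1) $u\le v$ implies $R(u)\supseteq R(v)$; (A2) $R(u+z)=R(u)+z$ for all $z\in\mathbb{R}^J$; (A3) $R(u)\notin\{\emptyset,\mathbb{R}^J\}$;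 (A4) $R(\gamma u+(1-\gamma)v)\supseteq\gamma R(u)+(1-\gamma)R(v)$ for $\gamma\in(0,1)$; (A5) the acceptance set $\mathcal{A}=\{u\in\mathbb{L}^J\mid 0\in R(u)\}$ is closed. $\mathbb{M}_1^J$ denotes the set of $J$-tuples $\mu=(\mu^1,\dots,\mu^J)$ of probability measures on $\Omega$, with $\mu_i=(\mu_i^1,\dots,\mu_i^J)^{\mathsf T}$, and $\mathbb{E}^\mu[u]=\sum_{i\in\Omega}\mu_i\cdot u_i$, where $\cdot$ is the componentwise (Hadamard) product. The minimal penalty function is $\beta(\mu,w)=\sup_{u\in\mathcal{A}}w^{\mathsf T}\mathbb{E}^\mu[u]$ for $\mu\in\mathbb{M}_1^J$, $w\in\mathbb{R}^J_+\setminus\{0\}$; it is known that $\inf_{z\in R(u)}w^{\mathsf T}z=\sup_{\mu\in\mathbb{M}_1^J}(w^{\mathsf T}\mathbb{E}^\mu[u]-\beta(\mu,w))$. Problem data: $A\in\mathbb{R}^{K\times M}$, $b\in\mathbb{R}^K$, $C\in\mathbb{R}^{J\times M}$, random $W\in\mathbb{L}^{L\times N}$, $T\in\mathbb{L}^{L\times M}$, $h\in\mathbb{L}^L$, $Q\in\mathbb{L}^{J\times N}$; $\mathcal{X}=\{(x,y)\in\mathbb{R}^M_+\times\mathbb{L}^N_+\mid Ax=b,\ T_ix+W_iy_i=h_i\ \forall i\in\Omega\}$, assumed nonempty and compact; $Cx+Qy$ has realizations $Cx+Q_iy_i$. For each $i\in\Omega$, $\mathcal{F}_i=\{(x_i,y_i)\in\mathbb{R}^M_+\times\mathbb{R}^N_+\mid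 Ax_i=b,\ T_ix_i+W_iy_i=h_i\}$, assumed nonempty and compact. $\mathscr{P}_1(w)$ is the optimal value of $\min w^{\mathsf T}z$ s.t. $z\in R(Cx+Qy)$, $(x,y)\in\mathcal{X}$, $z\in\mathbb{R}^J$. *)

theory Defs
  imports "HOL-Analysis.Analysis"
begin

text \<open>Random vectors on the finite sample space (a finite type 'w) are functions
  'w \<Rightarrow> real^'j.  Functions carry the product topology (library instance),
  which for a finite index type is the usual Euclidean topology.\<close>

definition hadamard :: "real^'j \<Rightarrow> real^'j \<Rightarrow> real^'j" where
  "hadamard a b = (\<chi> j. a $ j * b $ j)"

definition acceptance_set :: "(('w \<Rightarrow> real^'j) \<Rightarrow> (real^'j) set) \<Rightarrow> ('w \<Rightarrow> real^'j) set" where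
  "acceptance_set R = {u. 0 \<in> R u}"

definition multivariate_convex_risk_measure ::
  "(('w \<Rightarrow> real^'j) \<Rightarrow> (real^'j) set) \<Rightarrow> bool" where
  "multivariate_convex_risk_measure R \<longleftrightarrow>
     (\<forall>u v. u \<le> v \<longrightarrow> R v \<subseteq> R u) \<and>
     (\<forall>u z. R (\<lambda>i. u i + z) = (\<lambda>x. x + z) ` R u) \<and>
     (\<forall>u. R u \<noteq> {} \<and> R u \<noteq> UNIV) \<and>
     (\<forall>u v \<gamma>. 0 < \<gamma> \<and> \<gamma> < 1 \<longrightarrow>
        {\<gamma> *\<^sub>R a + (1 - \<gamma>) *\<^sub>R c | a c. a \<in> R u \<and> c \<in> R v}
          \<subseteq> R (\<lambda>i. \<gamma> *\<^sub>R u i + (1 - \<gamma>) *\<^sub>R v i)) \<and>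
     closed (acceptance_set R)"

text \<open>J-tuples of probability measures on the finite sample space: mu i $ j is the
  mass of the j-th measure at the outcome i.\<close>
definition prob_tuples :: "('w::finite \<Rightarrow> real^'j) set" where
  "prob_tuples = {\<mu>. (\<forall>i j. 0 \<le> \<mu> i $ j) \<and> (\<forall>j. (\<Sum>i\<in>UNIV. \<mu> i $ j) = 1)}"

definition expect_mu :: "('w::finite \<Rightarrow> real^'j) \<Rightarrow> ('w \<Rightarrow> real^'j) \<Rightarrow> real^'j" where
  "expect_mu \<mu> u = (\<Sum>i\<in>UNIV. hadamard (\<mu> i) (u i))"

definition min_penalty ::
  "(('w::finite \<Rightarrow> real^'j) \<Rightarrow> (real^'j) set) \<Rightarrow> ('w \<Rightarrow> real^'j) \<Rightarrow> real^'j \<Rightarrow> ereal" where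
  "min_penalty R \<mu> w = (SUP u \<in> acceptance_set R. ereal (w \<bullet> expect_mu \<mu> u))"

definition feasible_X ::
  "real^'m^'k \<Rightarrow> real^'k \<Rightarrow> ('w \<Rightarrow> real^'m^'l) \<Rightarrow> ('w \<Rightarrow> real^'n^'l) \<Rightarrow> ('w \<Rightarrow> real^'l)
   \<Rightarrow> ((real^'m) \<times> ('w \<Rightarrow> real^'n)) set" where
  "feasible_X A b T W h = {(x, y). 0 \<le> x \<and> (\<forall>i. 0 \<le> y i) \<and> A *v x = b \<and>
       (\<forall>i. T i *v x + W i *v y i = h i)}"

definition feasible_F ::
  "real^'m^'k \<Rightarrow> real^'k \<Rightarrow> ('w \<Rightarrow> real^'m^'l) \<Rightarrow> ('w \<Rightarrow> real^'n^'l) \<Rightarrow> ('w \<Rightarrow> real^'l)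
   \<Rightarrow> 'w \<Rightarrow> ((real^'m) \<times> (real^'n)) set" where
  "feasible_F A b T W h i = {(xi, yi). 0 \<le> xi \<and> 0 \<le> yi \<and> A *v xi = b \<and>
       T i *v xi + W i *v yi = h i}"

definition P1 ::
  "(('w \<Rightarrow> real^'j) \<Rightarrow> (real^'j) set) \<Rightarrow> real^'m^'k \<Rightarrow> real^'k \<Rightarrow> real^'m^'j
   \<Rightarrow> ('w \<Rightarrow> real^'m^'l) \<Rightarrow> ('w \<Rightarrow> real^'n^'l) \<Rightarrow> ('w \<Rightarrow> real^'l) \<Rightarrow> ('w \<Rightarrow> real^'n^'j)
   \<Rightarrow> real^'j \<Rightarrow> ereal" where
  "P1 R A b C T W h Q w =
     Inf {ereal (w \<bullet> z) | z x y. (x, y) \<in> feasible_X A b T W h \<and>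
                                 z \<in> R (\<lambda>i. C *v x + Q i *v y i)}"

definition f_scen ::
  "real^'m^'k \<Rightarrow> real^'k \<Rightarrow> real^'m^'j \<Rightarrow> ('w \<Rightarrow> real^'m^'l) \<Rightarrow> ('w \<Rightarrow> real^'n^'l)
   \<Rightarrow> ('w \<Rightarrow> real^'l) \<Rightarrow> ('w \<Rightarrow> real^'n^'j) \<Rightarrow> ('w \<Rightarrow> real)
   \<Rightarrow> 'w \<Rightarrow> real^'j \<Rightarrow> real^'m \<Rightarrow> real^'j \<Rightarrow> ereal" where
  "f_scen A b C T W h Q p i mui lami w =
     (INF xy \<in> feasible_F A b T W h i.
        ereal (w \<bullet> hadamard mui (C *v fst xy + Q i *v snd xy) + p i * (lami \<bullet> fst xy)))"

end

theory Submission
  imports Defs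
begin

text \<open>Weak duality is a pointwise estimate: for feasible (x, y) and z \<in> R(Cx + Qy), evaluating
  each scenario problem at (x, y i) bounds the sum of the f_i by w \<bullet> E^\<mu>[Cx + Qy] (the
  multipliers drop out because E[\<lambda>] = 0), and acceptability of Cx + Qy - z bounds the
  penalty from below by w \<bullet> E^\<mu>[Cx + Qy] - w \<bullet> z.

  Strong duality is proved by separation. Give every scenario its own copy x_i of the
  first-stage decision and collect the points (Cx_i + Q_i y_i - a_i - z, x - E[x], s) over all
  scenario-wise feasible decisions, acceptable positions a and pairs with w \<bullet> z \<le> s. This set
  is convex, and for c < P1 the point (0, 0, c) is not in its closure: the decisions range over
  a compact set, and the residual of an approximating point can be added to z because R is
  monotone. A separating functional (\<alpha>, \<delta>, \<gamma>) satisfies \<alpha> \<ge> 0, \<Sum>_i \<alpha>_i = \<gamma> w and \<gamma> > 0.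
  After dividing by \<gamma>, the relation \<alpha>_i = w \<cdot> \<mu>_i defines \<mu> \<in> M_1 and \<delta> defines multipliers \<lambda>
  with E[\<lambda>] = 0, and their dual value exceeds c.\<close>

lemma nonneg_if_affine_bounded_below:
  fixes b L k :: real
  assumes "\<And>t. 0 \<le> t \<Longrightarrow> b < L + k * t"
  shows "0 \<le> k"
proof (rule ccontr)
  assume "\<not> 0 \<le> k"
  then have "0 < - k" by simp
  define t where "t = (\<bar>L\<bar> + \<bar>b\<bar> + 1) / - k"
  have "0 \<le> t" using \<open>0 < - k\<close> unfolding t_def by (intro divide_nonneg_pos) auto
  moreover have "k * t = - (\<bar>L\<bar> + \<bar>b\<bar> + 1)" using \<open>0 < - k\<close> by (simp add: t_def)
  ultimately show False using assms[of t] by linarith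
qed

lemma zero_if_affine_bounded_below:
  fixes b L k :: real
  assumes "\<And>t. b < L + k * t"
  shows "k = 0"
proof -
  have "0 \<le> k" using assms by (rule nonneg_if_affine_bounded_below)
  moreover have "0 \<le> - k" using assms[of "- _"] by (intro nonneg_if_affine_bounded_below) simp
  ultimately show ?thesis by simp
qed

lemma risk_measure_mem_iff_acceptance:
  assumes "multivariate_convex_risk_measure R"
  shows "z \<in> R u \<longleftrightarrow> (\<lambda>i. u i - z) \<in> acceptance_set R"
proof -
  have "R (\<lambda>i. u i + - z) = (\<lambda>x. x + - z) ` R u"
    using assms unfolding multivariate_convex_risk_measure_def by blast
  then show ?thesis by (force simp: acceptance_set_def)
qed

lemma acceptance_set_downward_closed:
  assumes "multivariate_convex_risk_measure R" "a \<in> acceptance_set R" "v \<le> a"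
  shows "v \<in> acceptance_set R"
proof -
  have "R a \<subseteq> R v" using assms(1,3) by (simp add: multivariate_convex_risk_measure_def)
  then show ?thesis using assms(2) by (auto simp: acceptance_set_def)
qed

text \<open>Positions are transported to real^'j^'w, which unlike 'w \<Rightarrow> real^'j is a Euclidean
  space, so that convexity and separation are available.\<close>
definition acceptable_vecs :: "(('w \<Rightarrow> real^'j) \<Rightarrow> (real^'j) set) \<Rightarrow> (real^'j^'w) set" where
  "acceptable_vecs R = {a. ($) a \<in> acceptance_set R}"

lemma acceptable_vecs_nonempty:
  assumes "multivariate_convex_risk_measure R"
  shows "acceptable_vecs R \<noteq> {}"
proof -
  have "R (\<lambda>i. 0) \<noteq> {}"
    using assms unfolding multivariate_convex_risk_measure_def by (elim conjE) simp
  then obtain z where "z \<in> R (\<lambda>i. 0)" by blast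
  then have acc: "(\<lambda>i. - z) \<in> acceptance_set R"
    by (simp add: risk_measure_mem_iff_acceptance[OF assms])
  have eq: "($) (\<chi> i. - z) = (\<lambda>i. - z)" by (simp add: fun_eq_iff)
  have "(\<chi> i. - z) \<in> acceptable_vecs R"
    by (simp only: acceptable_vecs_def mem_Collect_eq eq acc)
  then show ?thesis by blast
qed

lemma convex_acceptable_vecs:
  fixes R :: "('w::finite \<Rightarrow> real^'j) \<Rightarrow> (real^'j) set"
  assumes "multivariate_convex_risk_measure R"
  shows "convex (acceptable_vecs R)"
proof (rule convexI)
  fix a c :: "real^'j^'w" and u v :: real
  assume ac: "a \<in> acceptable_vecs R" "c \<in> acceptable_vecs R" and uv: "0 \<le> u" "0 \<le> v" "u + v = 1"
  show "u *\<^sub>R a + v *\<^sub>R c \<in> acceptable_vecs R"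
  proof (cases "u = 0 \<or> v = 0")
    case True
    then show ?thesis using ac uv by auto
  next
    case False
    then have "0 < u" "u < 1" "v = 1 - u" using uv by auto
    then have "{u *\<^sub>R a' + (1 - u) *\<^sub>R c' | a' c'. a' \<in> R (($) a) \<and> c' \<in> R (($) c)}
        \<subseteq> R (\<lambda>i. u *\<^sub>R a $ i + (1 - u) *\<^sub>R c $ i)"
      using assms[unfolded multivariate_convex_risk_measure_def, THEN conjunct2, THEN conjunct2,
          THEN conjunct2, THEN conjunct1, rule_format, of u "($) a" "($) c"] by simp
    moreover have "0 \<in> R (($) a)" "0 \<in> R (($) c)"
      using ac by (auto simp: acceptable_vecs_def acceptance_set_def)
    ultimately have "0 \<in> R (\<lambda>i. u *\<^sub>R a $ i + (1 - u) *\<^sub>R c $ i)" by force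
    moreover have "($) (u *\<^sub>R a + v *\<^sub>R c) = (\<lambda>i. u *\<^sub>R a $ i + (1 - u) *\<^sub>R c $ i)"
      using \<open>v = 1 - u\<close> by (simp add: fun_eq_iff)
    ultimately show ?thesis by (simp add: acceptable_vecs_def acceptance_set_def)
  qed
qed

lemma expect_mu_diff_const:
  assumes "\<mu> \<in> prob_tuples"
  shows "expect_mu \<mu> (\<lambda>i. u i - z) = expect_mu \<mu> u - z"
proof -
  have "(\<Sum>i\<in>UNIV. hadamard (\<mu> i) z) = z"
    using assms by (simp add: prob_tuples_def hadamard_def vec_eq_iff flip: sum_distrib_right)
  then show ?thesis
    by (simp add: expect_mu_def hadamard_def vec_eq_iff right_diff_distrib sum_subtractf)
qed

lemma min_penalty_ge:
  assumes "multivariate_convex_risk_measure R" "\<mu> \<in> prob_tuples" "z \<in> R u"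
  shows "ereal (w \<bullet> expect_mu \<mu> u - w \<bullet> z) \<le> min_penalty R \<mu> w"
proof -
  have "(\<lambda>i. u i - z) \<in> acceptance_set R"
    using assms(1,3) by (simp add: risk_measure_mem_iff_acceptance)
  then show ?thesis
    unfolding min_penalty_def
    by (rule SUP_upper2) (simp add: expect_mu_diff_const[OF assms(2)] inner_diff_right)
qed

lemma prob_tuple_of_weights:
  fixes \<alpha> :: "real^'j^'w::finite" and w :: "real^'j"
  assumes nonneg: "\<And>i j. 0 \<le> \<alpha> $ i $ j" and sums: "\<And>j. (\<Sum>i\<in>UNIV. \<alpha> $ i $ j) = w $ j"
  obtains \<mu> where "\<mu> \<in> prob_tuples" "\<And>i v. w \<bullet> hadamard (\<mu> i) v = \<alpha> $ i \<bullet> v"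
proof
  define \<mu> :: "'w \<Rightarrow> real^'j" where
    "\<mu> i = (\<chi> j. if w $ j = 0 then 1 / real CARD('w) else \<alpha> $ i $ j / w $ j)" for i
    \<comment> \<open>for w $ j = 0 the j-th measure is irrelevant; the uniform one is taken\<close>
  have zero: "\<alpha> $ i $ j = 0" if "w $ j = 0" for i j
    using sum_nonneg_eq_0_iff[of UNIV "\<lambda>i. \<alpha> $ i $ j"] nonneg sums[of j] that by auto
  have pos: "0 < w $ j" if "w $ j \<noteq> 0" for j
    using sums[of j] sum_nonneg[of UNIV "\<lambda>i. \<alpha> $ i $ j"] nonneg that by force
  show "\<mu> \<in> prob_tuples"
    unfolding prob_tuples_def
  proof (intro CollectI conjI allI)
    fix i j
    show "0 \<le> \<mu> i $ j" using nonneg[of i j] pos[of j] by (simp add: \<mu>_def divide_nonneg_pos)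
  next
    fix j
    show "(\<Sum>i\<in>UNIV. \<mu> i $ j) = 1"
    proof (cases "w $ j = 0")
      case False
      then show ?thesis using sums[of j] by (simp add: \<mu>_def flip: sum_divide_distrib)
    qed (simp add: \<mu>_def)
  qed
  show "w \<bullet> hadamard (\<mu> i) v = \<alpha> $ i \<bullet> v" for i v
    unfolding inner_vec_def hadamard_def
    by (intro sum.cong refl) (simp add: \<mu>_def zero)
qed

definition weighted_mean :: "('w::finite \<Rightarrow> real) \<Rightarrow> 'a^'w \<Rightarrow> 'a::real_vector" where
  "weighted_mean p x = (\<Sum>i\<in>UNIV. p i *\<^sub>R x $ i)"

definition deviation :: "('w::finite \<Rightarrow> real) \<Rightarrow> 'a^'w \<Rightarrow> 'a::real_vector^'w" where
  "deviation p x = (\<chi> i. x $ i - weighted_mean p x)"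

lemma linear_weighted_mean: "linear (weighted_mean p)"
  by (rule linearI)
    (simp_all add: weighted_mean_def scaleR_add_right sum.distrib scaleR_sum_right mult.commute)

lemma linear_deviation: "linear (deviation p)"
  by (intro linearI) (simp_all add: deviation_def vec_eq_iff scaleR_diff_right
      linear_add[OF linear_weighted_mean] linear_scale[OF linear_weighted_mean])

lemma deviation_eq_0_iff: "deviation p x = 0 \<longleftrightarrow> (\<forall>i. x $ i = weighted_mean p x)"
  by (simp add: deviation_def vec_eq_iff)

lemma weighted_mean_const:
  assumes "(\<Sum>i\<in>UNIV. p i) = 1"
  shows "weighted_mean p (\<chi> i. c) = c"
  using assms by (simp add: weighted_mean_def flip: scaleR_sum_left)

text \<open>The multipliers lam dualize the nonanticipativity constraint deviation p x = 0.\<close>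
lemma multipliers_of_deviation_functional:
  fixes \<delta> :: "real^'m^'w::finite" and p :: "'w \<Rightarrow> real"
  assumes ppos: "\<And>i. 0 < p i" and psum: "(\<Sum>i\<in>UNIV. p i) = 1"
  obtains lam where "(\<Sum>i\<in>UNIV. p i *\<^sub>R lam i) = 0"
    and "\<And>x. (\<Sum>i\<in>UNIV. p i * (lam i \<bullet> x $ i)) = \<delta> \<bullet> deviation p x"
proof
  define D where "D = (\<Sum>i\<in>UNIV. \<delta> $ i)"
  define lam where "lam i = (1 / p i) *\<^sub>R (\<delta> $ i - p i *\<^sub>R D)" for i
  have plam: "p i *\<^sub>R lam i = \<delta> $ i - p i *\<^sub>R D" for i
    using ppos[of i] by (simp add: lam_def)
  show "(\<Sum>i\<in>UNIV. p i *\<^sub>R lam i) = 0"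
    using psum by (simp add: plam sum_subtractf D_def flip: scaleR_sum_left)
  fix x :: "real^'m^'w"
  have "(\<Sum>i\<in>UNIV. p i * (lam i \<bullet> x $ i)) = (\<Sum>i\<in>UNIV. \<delta> $ i \<bullet> x $ i - p i * (D \<bullet> x $ i))"
    unfolding inner_scaleR_left[symmetric] plam by (simp add: inner_diff_left)
  also have "\<dots> = \<delta> \<bullet> deviation p x"
    by (simp add: deviation_def inner_vec_def[of \<delta>] inner_diff_right sum_subtractf
        weighted_mean_def inner_sum_right inner_sum_left D_def sum_distrib_left)
      (rule sum.swap)
  finally show "(\<Sum>i\<in>UNIV. p i * (lam i \<bullet> x $ i)) = \<delta> \<bullet> deviation p x" .
qed

definition componentwise :: "('w::finite \<Rightarrow> ('a \<times> 'b) set) \<Rightarrow> (('a^'w) \<times> ('b^'w)) set" where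
  "componentwise F = {(x, y). \<forall>i. (x $ i, y $ i) \<in> F i}"

lemma convex_componentwise:
  assumes "\<And>i. convex (F i)"
  shows "convex (componentwise F)"
  unfolding convex_def componentwise_def
proof clarsimp
  fix x1 y1 x2 y2 and u v :: real and i
  assume "\<forall>i. (x1 $ i, y1 $ i) \<in> F i" "\<forall>i. (x2 $ i, y2 $ i) \<in> F i" "0 \<le> u" "0 \<le> v" "u + v = 1"
  then have "u *\<^sub>R (x1 $ i, y1 $ i) + v *\<^sub>R (x2 $ i, y2 $ i) \<in> F i"
    using assms[of i] unfolding convex_def by blast
  then show "(u *\<^sub>R x1 $ i + v *\<^sub>R x2 $ i, u *\<^sub>R y1 $ i + v *\<^sub>R y2 $ i) \<in> F i" by simp
qed

lemma compact_componentwise: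
  fixes F :: "'w::finite \<Rightarrow> ('a::euclidean_space \<times> 'b::euclidean_space) set"
  assumes "\<And>i. compact (F i)"
  shows "compact (componentwise F)"
proof (rule compact_eq_bounded_closed[THEN iffD2], rule conjI)
  have "bounded (F i)" for i using assms compact_imp_bounded by blast
  then have "\<forall>i. \<exists>B. \<forall>v\<in>F i. norm v \<le> B" by (simp add: bounded_iff)
  then obtain B where B: "\<And>i v. v \<in> F i \<Longrightarrow> norm v \<le> B i" by metis
  have sum_bound: "norm x \<le> (\<Sum>i\<in>UNIV. B i)" if "\<And>i. norm (x $ i) \<le> B i"
    for x :: "'c::real_normed_vector^'w"
    using L2_set_le_sum[of UNIV "\<lambda>i. norm (x $ i)"] sum_mono[of UNIV "\<lambda>i. norm (x $ i)" B] that
    by (simp add: norm_vec_def)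
  have "norm (x, y) \<le> 2 * (\<Sum>i\<in>UNIV. B i)" if "(x, y) \<in> componentwise F" for x y
  proof -
    have "norm (x $ i) \<le> B i" "norm (y $ i) \<le> B i" for i
      using that B[of "(x $ i, y $ i)" i]
      by (auto simp: componentwise_def intro: order_trans[OF norm_fst_le] order_trans[OF norm_snd_le])
    then show ?thesis using sum_bound[of x] sum_bound[of y] norm_Pair_le[of x y] by simp
  qed
  then show "bounded (componentwise F)" unfolding bounded_iff by (metis surj_pair)
next
  have "componentwise F = (\<Inter>i. (\<lambda>(x, y). (x $ i, y $ i)) -` F i)"
    by (auto simp: componentwise_def)
  moreover have "closed ((\<lambda>(x :: 'a^'w, y :: 'b^'w). (x $ i, y $ i)) -` F i)" for i
    using assms compact_imp_closed
    by (intro closed_vimage) (auto simp: case_prod_beta' intro!: continuous_intros)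
  ultimately show "closed (componentwise F)" by auto
qed

lemma INF_ereal_attained:
  fixes g :: "'a::topological_space \<Rightarrow> real"
  assumes "compact S" "S \<noteq> {}" "continuous_on S g"
  obtains m where "m \<in> S" "(INF x\<in>S. ereal (g x)) = ereal (g m)"
proof -
  obtain m where m: "m \<in> S" "\<And>x. x \<in> S \<Longrightarrow> g m \<le> g x"
    using continuous_attains_inf[OF assms] by blast
  then have "(INF x\<in>S. ereal (g x)) = ereal (g m)"
    by (intro antisym INF_lower2[OF m(1)] INF_greatest) auto
  with m(1) show thesis by (rule that)
qed

lemma convex_feasible_F: "convex (feasible_F A b T W h i)"
proof (rule convexI)
  fix xy1 xy2 and u v :: real
  assume "xy1 \<in> feasible_F A b T W h i" "xy2 \<in> feasible_F A b T W h i"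
    and uv: "0 \<le> u" "0 \<le> v" "u + v = 1"
  then obtain x1 y1 x2 y2 where xy: "xy1 = (x1, y1)" "xy2 = (x2, y2)"
    and f: "0 \<le> x1" "0 \<le> y1" "A *v x1 = b" "T i *v x1 + W i *v y1 = h i"
           "0 \<le> x2" "0 \<le> y2" "A *v x2 = b" "T i *v x2 + W i *v y2 = h i"
    by (auto simp: feasible_F_def)
  have "A *v (u *\<^sub>R x1 + v *\<^sub>R x2) = (u + v) *\<^sub>R b"
    using f by (simp add: matrix_vector_right_distrib matrix_vector_mult_scaleR scaleR_add_left)
  moreover have "T i *v (u *\<^sub>R x1 + v *\<^sub>R x2) + W i *v (u *\<^sub>R y1 + v *\<^sub>R y2)
      = u *\<^sub>R (T i *v x1 + W i *v y1) + v *\<^sub>R (T i *v x2 + W i *v y2)"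
    by (simp add: matrix_vector_right_distrib matrix_vector_mult_scaleR algebra_simps)
  then have "T i *v (u *\<^sub>R x1 + v *\<^sub>R x2) + W i *v (u *\<^sub>R y1 + v *\<^sub>R y2) = (u + v) *\<^sub>R h i"
    using f by (simp add: scaleR_add_left)
  moreover have "0 \<le> u *\<^sub>R x1 + v *\<^sub>R x2" "0 \<le> u *\<^sub>R y1 + v *\<^sub>R y2"
    using f uv by (auto intro!: add_nonneg_nonneg scaleR_nonneg_nonneg)
  ultimately show "u *\<^sub>R xy1 + v *\<^sub>R xy2 \<in> feasible_F A b T W h i"
    using uv by (simp add: xy feasible_F_def)
qed

locale two_stage_problem =
  fixes p :: "'w::finite \<Rightarrow> real"
    and R :: "('w \<Rightarrow> real^'j) \<Rightarrow> (real^'j) set"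
    and A :: "real^'m^'k" and b :: "real^'k" and C :: "real^'m^'j"
    and W :: "'w \<Rightarrow> real^'n^'l" and T :: "'w \<Rightarrow> real^'m^'l"
    and h :: "'w \<Rightarrow> real^'l" and Q :: "'w \<Rightarrow> real^'n^'j"
    and w :: "real^'j"
  assumes p_pos: "\<And>i. 0 < p i" and p_sum: "(\<Sum>i\<in>UNIV. p i) = 1"
    and risk: "multivariate_convex_risk_measure R"
    and X_nonempty: "feasible_X A b T W h \<noteq> {}"
    and F_nonempty: "\<And>i. feasible_F A b T W h i \<noteq> {}"
    and F_compact: "\<And>i. compact (feasible_F A b T W h i)"
begin

abbreviation scenario_decisions :: "((real^'m^'w) \<times> (real^'n^'w)) set" where
  "scenario_decisions \<equiv> componentwise (feasible_F A b T W h)"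

definition outcome :: "real^'m^'w \<Rightarrow> real^'n^'w \<Rightarrow> real^'j^'w" where
  "outcome x y = (\<chi> i. C *v x $ i + Q i *v y $ i)"

lemma outcome_add: "outcome (x1 + x2) (y1 + y2) = outcome x1 y1 + outcome x2 y2"
  by (simp add: outcome_def vec_eq_iff matrix_vector_right_distrib)

lemma outcome_scaleR: "outcome (c *\<^sub>R x) (c *\<^sub>R y) = c *\<^sub>R outcome x y"
  by (simp add: outcome_def vec_eq_iff matrix_vector_mult_scaleR algebra_simps)

lemma linear_outcome: "linear (\<lambda>(x, y). outcome x y)"
  by (rule linearI) (auto simp: outcome_add outcome_scaleR)

lemma nonanticipative_decision:
  assumes "(x, y) \<in> scenario_decisions" "deviation p x = 0"
  shows "(weighted_mean p x, ($) y) \<in> feasible_X A b T W h"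
    and "($) (outcome x y) = (\<lambda>i. C *v weighted_mean p x + Q i *v y $ i)"
  using assms deviation_eq_0_iff[of p x]
  by (auto simp: componentwise_def feasible_X_def feasible_F_def outcome_def)

lemma exists_nonanticipative_decision:
  obtains x y where "(x, y) \<in> scenario_decisions" "deviation p x = 0"
proof -
  obtain x0 y0 where "(x0, y0) \<in> feasible_X A b T W h" using X_nonempty by auto
  then have "((\<chi> i. x0), (\<chi> i. y0 i)) \<in> scenario_decisions" "deviation p (\<chi> i. x0) = 0"
    by (auto simp: feasible_X_def feasible_F_def componentwise_def deviation_def weighted_mean_const p_sum vec_eq_iff)
  then show thesis by (rule that)
qed

lemma sum_f_scen_attained:
  obtains x y where "(x, y) \<in> scenario_decisions"
    and "(\<Sum>i\<in>UNIV. f_scen A b C T W h Q p i (\<mu> i) (lam i) w) =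
      ereal (\<Sum>i\<in>UNIV. w \<bullet> hadamard (\<mu> i) (outcome x y $ i) + p i * (lam i \<bullet> x $ i))"
proof -
  define g where "g i xy = w \<bullet> hadamard (\<mu> i) (C *v fst xy + Q i *v snd xy) + p i * (lam i \<bullet> fst xy)"
    for i xy
  have cont: "continuous_on (feasible_F A b T W h i) (g i)" for i
    unfolding g_def hadamard_def inner_vec_def
    by (intro continuous_intros bounded_linear.continuous_on[OF matrix_vector_mul_bounded_linear])
  have "\<exists>m. m \<in> feasible_F A b T W h i \<and> f_scen A b C T W h Q p i (\<mu> i) (lam i) w = ereal (g i m)"
    for i
  proof -
    obtain m where "m \<in> feasible_F A b T W h i"
      "(INF xy \<in> feasible_F A b T W h i. ereal (g i xy)) = ereal (g i m)"
      by (rule INF_ereal_attained[OF F_compact F_nonempty cont])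
    then show ?thesis unfolding f_scen_def g_def by blast
  qed
  then obtain m where "\<And>i. m i \<in> feasible_F A b T W h i"
    and "\<And>i. f_scen A b C T W h Q p i (\<mu> i) (lam i) w = ereal (g i (m i))"
    by meson
  then show thesis
    by (intro that[of "\<chi> i. fst (m i)" "\<chi> i. snd (m i)"]) (simp_all add: componentwise_def g_def outcome_def)
qed

definition dual_objective :: "('w \<Rightarrow> real^'j) \<Rightarrow> ('w \<Rightarrow> real^'m) \<Rightarrow> ereal" where
  "dual_objective \<mu> lam =
     (\<Sum>i\<in>UNIV. f_scen A b C T W h Q p i (\<mu> i) (lam i) w) - min_penalty R \<mu> w"

lemma dual_objective_le_P1:
  assumes \<mu>: "\<mu> \<in> prob_tuples" and lam: "(\<Sum>i\<in>UNIV. p i *\<^sub>R lam i) = 0"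
  shows "dual_objective \<mu> lam \<le> P1 R A b C T W h Q w"
  unfolding P1_def
proof (rule Inf_greatest, clarify)
  fix z x y
  assume xy: "(x, y) \<in> feasible_X A b T W h" and z: "z \<in> R (\<lambda>i. C *v x + Q i *v y i)"
  define u where "u = (\<lambda>i. C *v x + Q i *v y i)"
  have "f_scen A b C T W h Q p i (\<mu> i) (lam i) w
      \<le> ereal (w \<bullet> hadamard (\<mu> i) (u i) + p i * (lam i \<bullet> x))" for i
    using xy unfolding f_scen_def u_def
    by (intro INF_lower2[of "(x, y i)"]) (auto simp: feasible_X_def feasible_F_def)
  then have "(\<Sum>i\<in>UNIV. f_scen A b C T W h Q p i (\<mu> i) (lam i) w)
      \<le> (\<Sum>i\<in>UNIV. ereal (w \<bullet> hadamard (\<mu> i) (u i) + p i * (lam i \<bullet> x)))"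
    by (rule sum_mono)
  also have "\<dots> = ereal (w \<bullet> expect_mu \<mu> u + (\<Sum>i\<in>UNIV. p i *\<^sub>R lam i) \<bullet> x)"
    by (simp add: expect_mu_def inner_sum_right inner_sum_left sum.distrib)
  finally have "(\<Sum>i\<in>UNIV. f_scen A b C T W h Q p i (\<mu> i) (lam i) w) \<le> ereal (w \<bullet> expect_mu \<mu> u)"
    using lam by simp
  moreover have "ereal (w \<bullet> expect_mu \<mu> u - w \<bullet> z) \<le> min_penalty R \<mu> w"
    using min_penalty_ge[OF risk \<mu>] z by (simp add: u_def)
  ultimately show "dual_objective \<mu> lam \<le> ereal (w \<bullet> z)"
    unfolding dual_objective_def by (fastforce dest: ereal_minus_mono)
qed

lemma P1_le_residual:
  assumes xy: "(x, y) \<in> scenario_decisions" "deviation p x = 0" and a: "a \<in> acceptable_vecs R"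
  shows "P1 R A b C T W h Q w \<le> ereal (w \<bullet> z + norm (outcome x y - a - (\<chi> i. z)) * (w \<bullet> 1))"
proof -
  define t where "t = outcome x y - a - (\<chi> i. z)"
  define \<rho> where "\<rho> = norm t"
  have "outcome x y $ i $ j - (z $ j + \<rho>) \<le> a $ i $ j" for i j
    using abs_ge_self[of "t $ i $ j"] component_le_norm_cart[of "t $ i" j]
      Finite_Cartesian_Product.norm_nth_le[of t i]
    unfolding \<rho>_def t_def by simp
  then have "(\<lambda>i. outcome x y $ i - (z + \<rho> *\<^sub>R 1)) \<le> ($) a"
    by (simp add: le_fun_def less_eq_vec_def)
  then have "(\<lambda>i. outcome x y $ i - (z + \<rho> *\<^sub>R 1)) \<in> acceptance_set R"
    using a by (auto simp: acceptable_vecs_def intro: acceptance_set_downward_closed[OF risk])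
  then have "z + \<rho> *\<^sub>R 1 \<in> R (\<lambda>i. C *v weighted_mean p x + Q i *v y $ i)"
    by (simp add: risk_measure_mem_iff_acceptance[OF risk] flip: nonanticipative_decision(2)[OF xy])
  then have "P1 R A b C T W h Q w \<le> ereal (w \<bullet> (z + \<rho> *\<^sub>R 1))"
    unfolding P1_def using nonanticipative_decision(1)[OF xy] by (intro Inf_lower) blast
  then show ?thesis by (simp add: \<rho>_def t_def inner_add_right)
qed

text \<open>P1 is the infimum of the s with (0, 0, s) in this set.\<close>
definition attainable_set :: "((real^'j^'w) \<times> (real^'m^'w) \<times> real) set" where
  "attainable_set = (\<lambda>((x, y), a, z, s). (outcome x y - a - (\<chi> i. z), deviation p x, s)) `
     (scenario_decisions \<times> acceptable_vecs R \<times> {(z, s). w \<bullet> z \<le> s})"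

lemma convex_attainable_set: "convex attainable_set"
proof -
  have "{(z, s). w \<bullet> z \<le> s} = {v. (w, -1::real) \<bullet> v \<le> 0}"
    by (auto simp: inner_prod_def)
  then have "convex {(z, s). w \<bullet> z \<le> s}" by (simp add: convex_halfspace_le)
  moreover have "linear (\<lambda>((x, y), a, z, s). (outcome x y - a - (\<chi> i. z), deviation p x, s))"
    by (rule linearI; clarsimp simp: outcome_add outcome_scaleR vec_eq_iff algebra_simps
        linear_add[OF linear_deviation] linear_scale[OF linear_deviation])
  ultimately show ?thesis
    unfolding attainable_set_def
    by (intro convex_linear_image convex_Times convex_componentwise convex_feasible_F
        convex_acceptable_vecs risk)
qed

lemma attainable_set_seqE:
  assumes "\<And>n. v n \<in> attainable_set"
  obtains x y a z s where "\<And>n. (x n, y n) \<in> scenario_decisions"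
    and "\<And>n. a n \<in> acceptable_vecs R" and "\<And>n. w \<bullet> z n \<le> s n"
    and "\<And>n. v n = (outcome (x n) (y n) - a n - (\<chi> i. z n), deviation p (x n), s n)"
proof -
  have "\<exists>x y a z s. (x, y) \<in> scenario_decisions \<and> a \<in> acceptable_vecs R \<and> w \<bullet> z \<le> s \<and>
      v n = (outcome x y - a - (\<chi> i. z), deviation p x, s)" for n
  proof -
    obtain x y a z s where "(x, y) \<in> scenario_decisions" "a \<in> acceptable_vecs R" "w \<bullet> z \<le> s"
      "v n = (outcome x y - a - (\<chi> i. z), deviation p x, s)"
      using assms[of n] by (auto simp: attainable_set_def)
    then show ?thesis by blast
  qed
  then show thesis using that by meson
qed

lemma P1_le_limit_of_residuals:
  assumes xy: "(x, y) \<in> scenario_decisions" "deviation p x = 0"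
    and a: "\<And>n. a n \<in> acceptable_vecs R" and zs: "\<And>n. w \<bullet> z n \<le> s n"
    and s: "s \<longlonglongrightarrow> c" and residual: "(\<lambda>n. outcome x y - a n - (\<chi> i. z n)) \<longlonglongrightarrow> 0"
  shows "P1 R A b C T W h Q w \<le> ereal c"
proof -
  define \<rho> where "\<rho> = (\<lambda>n. norm (outcome x y - a n - (\<chi> i. z n)))"
  have "\<rho> \<longlonglongrightarrow> 0" using residual by (simp add: \<rho>_def tendsto_norm_zero_iff)
  with s have lim: "(\<lambda>n. s n + \<rho> n * (w \<bullet> 1)) \<longlonglongrightarrow> c + 0 * (w \<bullet> 1)"
    by (intro tendsto_intros)
  have bound: "P1 R A b C T W h Q w \<le> ereal (s n + \<rho> n * (w \<bullet> 1))" for n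
  proof -
    have "P1 R A b C T W h Q w \<le> ereal (w \<bullet> z n + \<rho> n * (w \<bullet> 1))"
      using P1_le_residual[OF xy a[of n], where z = "z n"] by (simp add: \<rho>_def)
    also have "\<dots> \<le> ereal (s n + \<rho> n * (w \<bullet> 1))" using zs[of n] by simp
    finally show ?thesis .
  qed
  show ?thesis
  proof (cases "P1 R A b C T W h Q w")
    case (real P)
    then have "P \<le> c" using LIMSEQ_le_const[OF lim] bound by simp
    with real show ?thesis by simp
  qed (use bound[of 0] in auto)
qed

lemma not_in_closure_attainable_set:
  assumes c: "ereal c < P1 R A b C T W h Q w"
  shows "(0, 0, c) \<notin> closure attainable_set"
proof
  assume "(0, 0, c) \<in> closure attainable_set"
  then obtain v where v: "\<And>n. v n \<in> attainable_set" "v \<longlonglongrightarrow> (0, 0, c)"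
    by (auto simp: closure_sequential)
  obtain x y a z s where xy: "\<And>n. (x n, y n) \<in> scenario_decisions"
    and a: "\<And>n. a n \<in> acceptable_vecs R" and zs: "\<And>n. w \<bullet> z n \<le> s n"
    and vn: "\<And>n. v n = (outcome (x n) (y n) - a n - (\<chi> i. z n), deviation p (x n), s n)"
    by (fact attainable_set_seqE[where v = v, OF v(1)])
  have "seq_compact scenario_decisions"
    by (intro compact_imp_seq_compact compact_componentwise F_compact)
  moreover have "\<forall>n. (x n, y n) \<in> scenario_decisions" using xy by simp
  ultimately obtain l r where l: "l \<in> scenario_decisions" "strict_mono r"
    "((\<lambda>n. (x n, y n)) \<circ> r) \<longlonglongrightarrow> l"
    by (rule seq_compactE)
  obtain xs ys where "l = (xs, ys)" by fastforce
  with l have lim: "(xs, ys) \<in> scenario_decisions" "strict_mono r"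
    "(\<lambda>n. (x (r n), y (r n))) \<longlonglongrightarrow> (xs, ys)"
    by (simp_all add: o_def)
  have vr: "(\<lambda>n. v (r n)) \<longlonglongrightarrow> (0, 0, c)"
    using LIMSEQ_subseq_LIMSEQ[OF v(2) lim(2)] by (simp add: o_def)
  have "isCont (deviation p) xs"
    by (intro linear_continuous_at) (simp add: linear_deviation flip: linear_conv_bounded_linear)
  then have "(\<lambda>n. deviation p (x (r n))) \<longlonglongrightarrow> deviation p xs"
    using isCont_tendsto_compose[OF _ tendsto_fst[OF lim(3)]] by simp
  moreover have "(\<lambda>n. deviation p (x (r n))) \<longlonglongrightarrow> 0"
    using tendsto_fst[OF tendsto_snd[OF vr]] by (simp add: vn)
  ultimately have dev: "deviation p xs = 0" by (rule LIMSEQ_unique)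
  have "isCont (\<lambda>(x, y). outcome x y) (xs, ys)"
    by (intro linear_continuous_at) (simp add: linear_outcome flip: linear_conv_bounded_linear)
  then have "(\<lambda>n. outcome (x (r n)) (y (r n))) \<longlonglongrightarrow> outcome xs ys"
    using isCont_tendsto_compose[OF _ lim(3)] by fastforce
  then have "(\<lambda>n. outcome xs ys - outcome (x (r n)) (y (r n)) + fst (v (r n)))
      \<longlonglongrightarrow> outcome xs ys - outcome xs ys + fst (0 :: real^'j^'w, 0 :: real^'m^'w, c)"
    by (intro tendsto_intros tendsto_fst[OF vr])
  then have "(\<lambda>n. outcome xs ys - a (r n) - (\<chi> i. z (r n))) \<longlonglongrightarrow> 0"
    by (simp add: vn algebra_simps)
  moreover have "(\<lambda>n. s (r n)) \<longlonglongrightarrow> c"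
    using tendsto_snd[OF tendsto_snd[OF vr]] by (simp add: vn)
  ultimately have "P1 R A b C T W h Q w \<le> ereal c"
    using a zs by (intro P1_le_limit_of_residuals[OF lim(1) dev,
        where a = "\<lambda>n. a (r n)" and z = "\<lambda>n. z (r n)" and s = "\<lambda>n. s (r n)"])
  with c show False by simp
qed

lemma separating_functional:
  assumes "ereal c < P1 R A b C T W h Q w"
  obtains \<beta> :: real and \<alpha> :: "real^'j^'w" and \<delta> :: "real^'m^'w" and \<gamma> :: real
  where "\<And>x y a z s. (x, y) \<in> scenario_decisions \<Longrightarrow> a \<in> acceptable_vecs R \<Longrightarrow> w \<bullet> z \<le> s \<Longrightarrow>
           \<beta> < \<alpha> \<bullet> (outcome x y - a - (\<chi> i. z)) + \<delta> \<bullet> deviation p x + \<gamma> * s"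
    and "\<gamma> * c < \<beta>"
proof -
  obtain \<eta> \<beta> where sep: "\<eta> \<bullet> (0, 0, c) < \<beta>" "\<forall>v\<in>closure attainable_set. \<beta> < \<eta> \<bullet> v"
    using separating_hyperplane_closed_point[OF convex_closure[OF convex_attainable_set] closed_closure
        not_in_closure_attainable_set[OF assms]] by blast
  obtain \<alpha> \<delta> \<gamma> where \<eta>: "\<eta> = (\<alpha>, \<delta>, \<gamma>)" by (metis prod.exhaust)
  show thesis
  proof (rule that)
    fix x y a z s
    assume "(x, y) \<in> scenario_decisions" "a \<in> acceptable_vecs R" "w \<bullet> z \<le> s"
    then have "(outcome x y - a - (\<chi> i. z), deviation p x, s) \<in> closure attainable_set"
      unfolding attainable_set_def by (intro closure_subset[THEN subsetD] image_eqI[of _ _ "((x, y), a, z, s)"]) auto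
    with sep(2) show "\<beta> < \<alpha> \<bullet> (outcome x y - a - (\<chi> i. z)) + \<delta> \<bullet> deviation p x + \<gamma> * s"
      by (auto simp: \<eta> inner_prod_def)
  next
    show "\<gamma> * c < \<beta>" using sep(1) by (simp add: \<eta> inner_prod_def)
  qed
qed

lemma separating_functional_signs:
  assumes sep: "\<And>x y a z s. (x, y) \<in> scenario_decisions \<Longrightarrow> a \<in> acceptable_vecs R \<Longrightarrow> w \<bullet> z \<le> s \<Longrightarrow>
           \<beta> < \<alpha> \<bullet> (outcome x y - a - (\<chi> i. z)) + \<delta> \<bullet> deviation p x + \<gamma> * s"
    and \<gamma>c: "\<gamma> * c < \<beta>"
  shows "0 < \<gamma>" and "0 \<le> \<alpha> $ i $ j" and "(\<Sum>k\<in>UNIV. \<alpha> $ k $ j) = \<gamma> * w $ j"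
proof -
  obtain x0 y0 where x0: "(x0, y0) \<in> scenario_decisions" "deviation p x0 = 0"
    by (rule exists_nonanticipative_decision)
  obtain a0 where a0: "a0 \<in> acceptable_vecs R" using acceptable_vecs_nonempty[OF risk] by blast
  define V where "V = outcome x0 y0 - a0"
  have sep0: "\<beta> < \<alpha> \<bullet> (V + a - (\<chi> i. z)) + \<gamma> * s"
    if "a0 - a \<in> acceptable_vecs R" "w \<bullet> z \<le> s" for a z s
    using sep[OF x0(1) that] by (simp add: x0 V_def algebra_simps)
  text \<open>The attainable set recedes along s, along -a (acceptable positions are downward
    closed) and along (z, w \<bullet> z); a functional bounded below on it is nonnegative on the first
    two directions and vanishes on the third.\<close>
  have "0 \<le> \<gamma>"
    using sep0[of 0 0] a0 by (intro nonneg_if_affine_bounded_below[of \<beta> "\<alpha> \<bullet> V"]) (simp flip: zero_vec_def)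
  have \<alpha>_nonneg: "0 \<le> \<alpha> $ i $ j" for i j
  proof (rule nonneg_if_affine_bounded_below[of \<beta> "\<alpha> \<bullet> V"])
    fix t :: real
    assume "0 \<le> t"
    then have "a0 - t *\<^sub>R axis i (axis j 1) \<in> acceptable_vecs R"
      using a0 acceptance_set_downward_closed[OF risk]
      by (fastforce simp: acceptable_vecs_def le_fun_def less_eq_vec_def axis_def)
    from sep0[of "t *\<^sub>R axis i (axis j 1)" 0 0, OF this] show "\<beta> < \<alpha> \<bullet> V + \<alpha> $ i $ j * t"
      by (simp add: inner_add_right inner_axis mult.commute flip: zero_vec_def)
  qed
  have \<alpha>_sum: "(\<Sum>k\<in>UNIV. \<alpha> $ k $ j) = \<gamma> * w $ j" for j
  proof -
    have "\<alpha> \<bullet> (\<chi> i. t *\<^sub>R axis j 1) = t * (\<Sum>k\<in>UNIV. \<alpha> $ k $ j)" for t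
      by (simp add: inner_vec_def[of \<alpha>] inner_axis sum_distrib_left mult.commute)
    then have "\<gamma> * w $ j - (\<Sum>k\<in>UNIV. \<alpha> $ k $ j) = 0"
      using sep0[of 0 "t *\<^sub>R axis j 1" "t * w $ j" for t] a0
      by (intro zero_if_affine_bounded_below[of \<beta> "\<alpha> \<bullet> V"]) (simp add: inner_diff_right inner_axis algebra_simps)
    then show ?thesis by simp
  qed
  show "0 < \<gamma>"
  proof (rule ccontr)
    assume "\<not> 0 < \<gamma>"
    then have "\<gamma> = 0" using \<open>0 \<le> \<gamma>\<close> by simp
    then have "\<alpha> = 0"
      using \<alpha>_nonneg \<alpha>_sum sum_nonneg_eq_0_iff[of UNIV "\<lambda>k. \<alpha> $ k $ _"] by (simp add: vec_eq_iff)
    then show False using sep0[of 0 0 0] a0 \<gamma>c \<open>\<gamma> = 0\<close> by (simp flip: zero_vec_def)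
  qed
  show "0 \<le> \<alpha> $ i $ j" by (rule \<alpha>_nonneg)
  show "(\<Sum>k\<in>UNIV. \<alpha> $ k $ j) = \<gamma> * w $ j" by (rule \<alpha>_sum)
qed

lemma dual_certificate:
  assumes "ereal c < P1 R A b C T W h Q w"
  obtains \<beta> :: real and \<alpha> :: "real^'j^'w" and \<delta> :: "real^'m^'w" where "c < \<beta>"
    and "\<And>i j. 0 \<le> \<alpha> $ i $ j" and "\<And>j. (\<Sum>i\<in>UNIV. \<alpha> $ i $ j) = w $ j"
    and "\<And>x y a. (x, y) \<in> scenario_decisions \<Longrightarrow> a \<in> acceptable_vecs R \<Longrightarrow>
           \<beta> < \<alpha> \<bullet> (outcome x y - a) + \<delta> \<bullet> deviation p x"
proof -
  obtain \<beta> \<alpha> \<delta> \<gamma>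
    where sep: "\<And>x y a z s. (x, y) \<in> scenario_decisions \<Longrightarrow> a \<in> acceptable_vecs R \<Longrightarrow> w \<bullet> z \<le> s \<Longrightarrow>
           \<beta> < \<alpha> \<bullet> (outcome x y - a - (\<chi> i. z)) + \<delta> \<bullet> deviation p x + \<gamma> * s"
    and \<gamma>c: "\<gamma> * c < \<beta>"
    by (fact separating_functional[OF assms])
  note signs = separating_functional_signs[OF sep \<gamma>c]
  show thesis
  proof (rule that[of "\<beta> / \<gamma>" "(1 / \<gamma>) *\<^sub>R \<alpha>" "(1 / \<gamma>) *\<^sub>R \<delta>"])
    show "c < \<beta> / \<gamma>" using \<gamma>c signs(1) by (simp add: pos_less_divide_eq mult.commute)
    show "0 \<le> ((1 / \<gamma>) *\<^sub>R \<alpha>) $ i $ j" for i j using signs(1,2) by simp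
    show "(\<Sum>i\<in>UNIV. ((1 / \<gamma>) *\<^sub>R \<alpha>) $ i $ j) = w $ j" for j
      using signs(1,3) by (simp flip: sum_divide_distrib)
    fix x y a
    assume "(x, y) \<in> scenario_decisions" "a \<in> acceptable_vecs R"
    from sep[OF this, of 0 0] signs(1)
    show "\<beta> / \<gamma> < ((1 / \<gamma>) *\<^sub>R \<alpha>) \<bullet> (outcome x y - a) + ((1 / \<gamma>) *\<^sub>R \<delta>) \<bullet> deviation p x"
      by (simp add: divide_strict_right_mono flip: add_divide_distrib zero_vec_def)
  qed
qed

lemma exists_dual_objective_gt:
  assumes "ereal c < P1 R A b C T W h Q w"
  obtains \<mu> lam where "\<mu> \<in> prob_tuples" "(\<Sum>i\<in>UNIV. p i *\<^sub>R lam i) = 0" "ereal c < dual_objective \<mu> lam"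
proof -
  obtain \<beta> \<alpha> \<delta> where "c < \<beta>" and \<alpha>: "\<And>i j. 0 \<le> \<alpha> $ i $ j" "\<And>j. (\<Sum>i\<in>UNIV. \<alpha> $ i $ j) = w $ j"
    and cert: "\<And>x y a. (x, y) \<in> scenario_decisions \<Longrightarrow> a \<in> acceptable_vecs R \<Longrightarrow>
           \<beta> < \<alpha> \<bullet> (outcome x y - a) + \<delta> \<bullet> deviation p x"
    by (fact dual_certificate[OF assms])
  obtain \<mu> where \<mu>: "\<mu> \<in> prob_tuples" "\<And>i v. w \<bullet> hadamard (\<mu> i) v = \<alpha> $ i \<bullet> v"
    using prob_tuple_of_weights[OF \<alpha>] by blast
  obtain lam where lam: "(\<Sum>i\<in>UNIV. p i *\<^sub>R lam i) = 0"
    "\<And>x. (\<Sum>i\<in>UNIV. p i * (lam i \<bullet> x $ i)) = \<delta> \<bullet> deviation p x"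
    using multipliers_of_deviation_functional[OF p_pos p_sum] by blast
  obtain xs ys where xs: "(xs, ys) \<in> scenario_decisions"
    and attained: "(\<Sum>i\<in>UNIV. f_scen A b C T W h Q p i (\<mu> i) (lam i) w) =
      ereal (\<Sum>i\<in>UNIV. w \<bullet> hadamard (\<mu> i) (outcome xs ys $ i) + p i * (lam i \<bullet> xs $ i))"
    by (fact sum_f_scen_attained)
  define S where "S = \<alpha> \<bullet> outcome xs ys + \<delta> \<bullet> deviation p xs"
  have sum_f: "(\<Sum>i\<in>UNIV. f_scen A b C T W h Q p i (\<mu> i) (lam i) w) = ereal S"
    by (simp add: attained S_def \<mu>(2) inner_vec_def[of \<alpha>] sum.distrib flip: lam(2))
  have "min_penalty R \<mu> w \<le> ereal (S - \<beta>)"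
    unfolding min_penalty_def
  proof (rule SUP_least)
    fix a assume "a \<in> acceptance_set R"
    then have "(\<chi> i. a i) \<in> acceptable_vecs R" by (simp add: acceptable_vecs_def vec_lambda_inverse)
    from cert[OF xs this] have "\<alpha> \<bullet> (\<chi> i. a i) < S - \<beta>"
      by (simp add: S_def inner_diff_right)
    moreover have "w \<bullet> expect_mu \<mu> a = \<alpha> \<bullet> (\<chi> i. a i)"
      by (simp add: expect_mu_def inner_sum_right \<mu>(2) inner_vec_def[of \<alpha>])
    ultimately show "ereal (w \<bullet> expect_mu \<mu> a) \<le> ereal (S - \<beta>)" by simp
  qed
  then have "ereal c < dual_objective \<mu> lam"
    using \<open>c < \<beta>\<close> unfolding dual_objective_def sum_f
    by (cases "min_penalty R \<mu> w") auto
  with \<mu>(1) lam(1) show thesis by (rule that)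
qed

lemma P1_eq_SUP_dual_objective:
  "P1 R A b C T W h Q w =
     (SUP (\<mu>, lam) \<in> prob_tuples \<times> {lam. (\<Sum>i\<in>UNIV. p i *\<^sub>R lam i) = 0}. dual_objective \<mu> lam)"
  (is "?P = ?D")
proof (rule antisym)
  show "?P \<le> ?D"
  proof (rule dense_le)
    fix e assume e: "e < ?P"
    show "e \<le> ?D"
    proof (cases e)
      case (real c)
      obtain \<mu> lam where "\<mu> \<in> prob_tuples" "(\<Sum>i\<in>UNIV. p i *\<^sub>R lam i) = 0" "ereal c < dual_objective \<mu> lam"
        using exists_dual_objective_gt e real by blast
      then show ?thesis unfolding real by (intro SUP_upper2[of "(\<mu>, lam)"]) auto
    qed (use e in auto)
  qed
  show "?D \<le> ?P"
    by (rule SUP_least) (auto intro: dual_objective_le_P1)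
qed

end

theorem theorem5p1:
  fixes p :: "'w::finite \<Rightarrow> real"
    and R :: "('w \<Rightarrow> real^'j) \<Rightarrow> (real^'j) set"
    and A :: "real^'m^'k" and b :: "real^'k" and C :: "real^'m^'j"
    and W :: "'w \<Rightarrow> real^'n^'l" and T :: "'w \<Rightarrow> real^'m^'l"
    and h :: "'w \<Rightarrow> real^'l" and Q :: "'w \<Rightarrow> real^'n^'j"
    and w :: "real^'j"
  assumes "CARD('w) \<ge> 2"
    and "\<forall>i. p i > 0" and "(\<Sum>i\<in>UNIV. p i) = 1"
    and "multivariate_convex_risk_measure R"
    and "feasible_X A b T W h \<noteq> {}" and "compact (feasible_X A b T W h)"
    and "\<forall>i. feasible_F A b T W h i \<noteq> {} \<and> compact (feasible_F A b T W h i)"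
    and "0 \<le> w" and "w \<noteq> 0"
  shows "P1 R A b C T W h Q w =
    (SUP (mu, lam) \<in> prob_tuples \<times> {lam::'w \<Rightarrow> real^'m. (\<Sum>i\<in>UNIV. p i *\<^sub>R lam i) = 0}.
       (\<Sum>i\<in>UNIV. f_scen A b C T W h Q p i (mu i) (lam i) w) - min_penalty R mu w)"
  \<comment> \<open>Neither is 0 \<le> w: if w has
     a negative entry, both sides are -\<infinity>, since each R u is closed upwards.\<close>
proof -
  interpret two_stage_problem p R A b C W T h Q w
    using assms by unfold_locales auto
  show ?thesis
    using P1_eq_SUP_dual_objective by (simp add: dual_objective_def)
qed

end
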